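(* Let $q$ be a prime power and $\mathcal{L}$ a non-empty set of lines of $\mathrm{PG}(n,q)$ satisfying (Pt), (Pl), (Sd) and (To) (see context). Suppose $\mathcal{L}$ contains a pentagon with vertices $A,B,C,D,E$, and let $U=\langle A,B,C,D,E\rangle$. Then $|\mathcal{L}_U|\ge 5q$ and $\dim(U)=4$.
   Context: (Pt): every point of $\mathrm{PG}(n,q)$ lies on $0$ or $q+1$ lines of $\mathcal{L}$. (Pl): every plane contains $0$, $1$ or $q+1$ lines of $\mathcal{L}$. (Sd): every solid ($3$-dimensional subspace) contains $0$, $1$, $q+1$ or $2q+1$ lines of $\mathcal{L}$. (To): $|\mathcal{L}|\le q^5+q^4+q^3+q^2+q+1$. For a subspace $U$, $\mathcal{L}_U$ is the set of lines of $\mathcal{L}$ contained in $U$. A pentagon of $\mathcal{L}$ with vertices $A,B,C,D,E$ is a set of five pairwise distinct points such that the lines $AB,BC,CD,DE,EA$ all belong to $\mathcal{L}$ and are pairwise distinct. *)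

theory Defs
  imports "HOL-Analysis.Analysis"
begin

text \<open>PG(n,q) is modelled as the lattice of subspaces of the vector space F^(n+1),
  where F is a finite field of order q (type 'a) and n+1 = CARD('n).
  A projective k-subspace is a vector subspace of (vector) dimension k+1.\<close>

definition proj_sub :: "nat \<Rightarrow> ('a::field ^ 'n) set \<Rightarrow> bool" where
  "proj_sub k U \<longleftrightarrow> vec.subspace U \<and> vec.dim U = k + 1"

abbreviation is_point :: "('a::field ^ 'n) set \<Rightarrow> bool" where "is_point \<equiv> proj_sub 0"
abbreviation is_line :: "('a::field ^ 'n) set \<Rightarrow> bool" where "is_line \<equiv> proj_sub 1"
abbreviation is_plane :: "('a::field ^ 'n) set \<Rightarrow> bool" where "is_plane \<equiv> proj_sub 2"
abbreviation is_solid :: "('a::field ^ 'n) set \<Rightarrow> bool" where "is_solid \<equiv> proj_sub 3"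

definition pdim :: "('a::field ^ 'n) set \<Rightarrow> int" where
  "pdim U = int (vec.dim U) - 1"

definition join :: "('a::field ^ 'n) set set \<Rightarrow> ('a ^ 'n) set" where
  "join S = vec.span (\<Union> S)"

definition lines_in :: "('a::field ^ 'n) set set \<Rightarrow> ('a ^ 'n) set \<Rightarrow> ('a ^ 'n) set set" where
  "lines_in L U = {l \<in> L. l \<subseteq> U}"

definition cond_Pt :: "('a::{field,finite} ^ 'n) set set \<Rightarrow> bool" where
  "cond_Pt L \<longleftrightarrow> (\<forall>P. is_point P \<longrightarrow>
     card {l \<in> L. P \<subseteq> l} = 0 \<or> card {l \<in> L. P \<subseteq> l} = CARD('a) + 1)"

definition cond_Pl :: "('a::{field,finite} ^ 'n) set set \<Rightarrow> bool" where
  "cond_Pl L \<longleftrightarrow> (\<forall>\<pi>. is_plane \<pi> \<longrightarrow> card (lines_in L \<pi>) \<in> {0, 1, CARD('a) + 1})"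

definition cond_Sd :: "('a::{field,finite} ^ 'n) set set \<Rightarrow> bool" where
  "cond_Sd L \<longleftrightarrow> (\<forall>S. is_solid S \<longrightarrow>
     card (lines_in L S) \<in> {0, 1, CARD('a) + 1, 2 * CARD('a) + 1})"

definition cond_To :: "('a::{field,finite} ^ 'n) set set \<Rightarrow> bool" where
  "cond_To L \<longleftrightarrow> (let q = CARD('a) in card L \<le> q^5 + q^4 + q^3 + q^2 + q + 1)"

definition is_pentagon :: "('a::field ^ 'n) set set \<Rightarrow> ('a ^ 'n) set \<Rightarrow> ('a ^ 'n) set \<Rightarrow>
    ('a ^ 'n) set \<Rightarrow> ('a ^ 'n) set \<Rightarrow> ('a ^ 'n) set \<Rightarrow> bool" where
  "is_pentagon L A B C D E \<longleftrightarrow>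
     is_point A \<and> is_point B \<and> is_point C \<and> is_point D \<and> is_point E \<and>
     distinct [A, B, C, D, E] \<and>
     join {A, B} \<in> L \<and> join {B, C} \<in> L \<and> join {C, D} \<in> L \<and> join {D, E} \<in> L \<and> join {E, A} \<in> L \<and>
     distinct [join {A, B}, join {B, C}, join {C, D}, join {D, E}, join {E, A}]"

end

theory Submission
  imports Defs
begin

text \<open>Let a plane \<pi> contain two lines of L through a point V. If a line n of L in \<pi> missed V,
  it would meet one of them, l, in a point X \<noteq> V. Every line k of L through X lies in \<pi>: otherwise
  the planes \<pi>, \<langle>k,l\<rangle> and \<langle>k,n\<rangle> of the solid \<langle>\<pi>,k\<rangle> would each carry q+1 lines of L (Pl),
  pairwise sharing at most one, so the solid would contain at least 3q > 2q+1 lines, against (Sd).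
  By (Pt) the q+1 lines through X are then all the lines of L in \<pi>, including the second line
  through V, which is impossible. Hence all lines of L in \<pi> pass through V.

  The five planes spanned by consecutive edges of the pentagon are of this kind. Adjacent ones share
  only their common edge; a line common to the planes at A and C would put C, hence the edge BC,
  into the plane at A and force BC through A. So U contains at least 5(q+1) - 5 = 5q lines, more
  than a plane or a solid can carry, while being spanned by five points; thus dim U = 4.\<close>

context finite_dimensional_vector_space
begin

lemma dim_span_Un_add_dim_Int:
  assumes "subspace S" "subspace T"
  shows "dim (span (S \<union> T)) + dim (S \<inter> T) = dim S + dim T"
proof -
  have "span S = S" "span T = T" using assms by auto
  hence "span (S \<union> T) = {x + y |x y. x \<in> S \<and> y \<in> T}"
    by (simp only: span_Un)
  thus ?thesis using dim_sums_Int[OF assms] by simp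
qed

lemma dim_Int_less:
  assumes "subspace S" "subspace T" "\<not> S \<subseteq> T"
  shows "dim (S \<inter> T) < dim S"
proof -
  have "span (S \<inter> T) = S \<inter> T" "span S = S"
    using assms subspace_inter by auto
  moreover have "S \<inter> T \<subset> S" using assms(3) by blast
  ultimately show ?thesis using dim_psubset by metis
qed

lemma dim_Un_le: "dim (S \<union> T) \<le> dim S + dim T"
proof -
  have "span (S \<union> T) = span (span S \<union> span T)"
    by (simp add: span_Un span_span)
  hence "dim (S \<union> T) = dim (span (span S \<union> span T))"
    by (metis dim_span)
  also have "\<dots> \<le> dim (span S) + dim (span T)"
    using dim_span_Un_add_dim_Int[of "span S" "span T"] by simp
  finally show ?thesis by simp
qed

lemma dim_Union_le_sum: "finite \<S> \<Longrightarrow> dim (\<Union>\<S>) \<le> (\<Sum>X\<in>\<S>. dim X)"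
proof (induction rule: finite_induct)
  case (insert X \<S>)
  then show ?case using dim_Un_le[of X "\<Union>\<S>"] by simp
qed (simp add: dim_empty)

end

lemma subset_join: "X \<in> \<S> \<Longrightarrow> X \<subseteq> join \<S>"
  unfolding join_def by (meson Union_upper order_trans vec.span_superset)

lemma join_subset: "vec.subspace U \<Longrightarrow> \<Union>\<S> \<subseteq> U \<Longrightarrow> join \<S> \<subseteq> U"
  unfolding join_def by (rule vec.span_minimal)

lemma join_mono: "\<S> \<subseteq> \<T> \<Longrightarrow> join \<S> \<subseteq> join \<T>"
  unfolding join_def by (simp add: Sup_subset_mono vec.span_mono)

lemma proj_sub_subset_eq: "proj_sub k U \<Longrightarrow> proj_sub k W \<Longrightarrow> U \<subseteq> W \<Longrightarrow> U = W"
  unfolding proj_sub_def by (simp add: vec.subspace_dim_equal)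

lemma lines_Int_eq_point:
  assumes "is_line l" "is_line m" "l \<noteq> m" "is_point P" "P \<subseteq> l" "P \<subseteq> m"
  shows "l \<inter> m = P"
proof -
  have "\<not> l \<subseteq> m" using assms proj_sub_subset_eq by blast
  hence "vec.dim (l \<inter> m) \<le> vec.dim P"
    using assms vec.dim_Int_less[of l m] unfolding proj_sub_def by simp
  thus ?thesis
    using assms vec.subspace_dim_equal[of P "l \<inter> m"] vec.subspace_inter
    unfolding proj_sub_def by auto
qed

lemma lines_eq_if_two_points:
  assumes "is_line l" "is_line m" "is_point P" "is_point Q" "P \<noteq> Q"
    "P \<subseteq> l" "Q \<subseteq> l" "P \<subseteq> m" "Q \<subseteq> m"
  shows "l = m"
  using assms lines_Int_eq_point[of l m P] lines_Int_eq_point[of l m Q] by fastforce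

lemma is_plane_span_lines:
  assumes "is_line l" "is_line m" "l \<noteq> m" "is_point P" "P \<subseteq> l" "P \<subseteq> m"
  shows "is_plane (vec.span (l \<union> m))"
  using vec.dim_span_Un_add_dim_Int[of l m] lines_Int_eq_point[OF assms] assms
  unfolding proj_sub_def by simp

lemma coplanar_lines_Int_point:
  assumes "is_plane \<pi>" "is_line l" "is_line m" "l \<noteq> m" "l \<subseteq> \<pi>" "m \<subseteq> \<pi>"
  shows "is_point (l \<inter> m)"
proof -
  have "\<not> l \<subseteq> m" using assms proj_sub_subset_eq by blast
  hence "vec.dim (l \<inter> m) < 2" using assms vec.dim_Int_less[of l m] unfolding proj_sub_def by simp
  moreover have "vec.span (l \<union> m) \<subseteq> \<pi>"
    using assms vec.span_minimal[of "l \<union> m" \<pi>] unfolding proj_sub_def by simp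
  hence "vec.dim (vec.span (l \<union> m)) \<le> vec.dim \<pi>" by (rule vec.dim_subset)
  ultimately show ?thesis
    using assms vec.dim_span_Un_add_dim_Int[of l m]
    unfolding proj_sub_def by (simp add: vec.subspace_inter)
qed

lemma planes_Int_eq_line:
  assumes "is_plane \<sigma>" "is_plane \<pi>" "\<sigma> \<noteq> \<pi>" "is_line l" "l \<subseteq> \<sigma>" "l \<subseteq> \<pi>"
  shows "\<sigma> \<inter> \<pi> = l"
proof -
  have "\<not> \<sigma> \<subseteq> \<pi>" using assms proj_sub_subset_eq by blast
  hence "vec.dim (\<sigma> \<inter> \<pi>) \<le> vec.dim l"
    using assms vec.dim_Int_less[of \<sigma> \<pi>] unfolding proj_sub_def by simp
  thus ?thesis
    using assms vec.subspace_dim_equal[of l "\<sigma> \<inter> \<pi>"] vec.subspace_inter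
    unfolding proj_sub_def by auto
qed

lemma is_solid_span_plane_line:
  assumes "is_plane \<pi>" "is_line k" "\<not> k \<subseteq> \<pi>" "is_point X" "X \<subseteq> \<pi>" "X \<subseteq> k"
  shows "is_solid (vec.span (\<pi> \<union> k))"
proof -
  have "vec.dim (k \<inter> \<pi>) < 2" using assms vec.dim_Int_less[of k \<pi>] unfolding proj_sub_def by simp
  moreover have "vec.dim X \<le> vec.dim (\<pi> \<inter> k)" using assms vec.dim_subset by (metis le_inf_iff)
  ultimately have "vec.dim (\<pi> \<inter> k) = 1" using assms unfolding proj_sub_def by (simp add: Int_commute)
  thus ?thesis using assms vec.dim_span_Un_add_dim_Int[of \<pi> k] unfolding proj_sub_def by simp
qed

lemma card_field_ge_2: "CARD('a::{field,finite}) \<ge> 2"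
proof -
  have "card {0::'a, 1} = 2" by simp
  moreover have "card {0::'a, 1} \<le> CARD('a)" by (rule card_mono) auto
  ultimately show ?thesis by simp
qed

definition vertex_plane :: "('a::field ^ 'n) set \<Rightarrow> ('a ^ 'n) set \<Rightarrow> ('a ^ 'n) set \<Rightarrow> ('a ^ 'n) set" where
  "vertex_plane X Y Z = vec.span (join {X, Y} \<union> join {Y, Z})"

lemma vertex_plane_subset_join:
  assumes "X \<in> \<S>" "Y \<in> \<S>" "Z \<in> \<S>"
  shows "vertex_plane X Y Z \<subseteq> join \<S>"
proof -
  have "join {X, Y} \<subseteq> join \<S>" "join {Y, Z} \<subseteq> join \<S>" using assms by (simp_all add: join_mono)
  moreover have "vec.subspace (join \<S>)" by (simp add: join_def)
  ultimately show ?thesis unfolding vertex_plane_def by (simp add: vec.span_minimal)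
qed

lemma card_add_le_card_Un_add:
  assumes "finite X" "finite Y" "finite Z" "X \<inter> Y \<subseteq> Z"
  shows "card X + card Y \<le> card (X \<union> Y) + card Z"
  using card_Un_Int[OF assms(1,2)] card_mono[OF assms(3,4)] by linarith

lemma card_Un_cycle5:
  assumes fin: "finite (Sa \<union> Sb \<union> Sc \<union> Sd \<union> Se)"
    and adj: "Sa \<inter> Sb \<subseteq> {ab}" "Sb \<inter> Sc \<subseteq> {bc}" "Sc \<inter> Sd \<subseteq> {cd}" "Sd \<inter> Se \<subseteq> {de}"
      "Se \<inter> Sa \<subseteq> {ea}"
    and nonadj: "Sa \<inter> Sc = {}" "Sb \<inter> Sd = {}" "Sc \<inter> Se = {}" "Sd \<inter> Sa = {}" "Se \<inter> Sb = {}"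
  shows "card Sa + card Sb + card Sc + card Sd + card Se \<le> card (Sa \<union> Sb \<union> Sc \<union> Sd \<union> Se) + 5"
proof -
  have "finite Sa" "finite Sb" "finite Sc" "finite Sd" "finite Se" using fin by auto
  hence "card Sa + card Sb \<le> card (Sa \<union> Sb) + card {ab}"
    "card (Sa \<union> Sb) + card Sc \<le> card (Sa \<union> Sb \<union> Sc) + card {bc}"
    "card (Sa \<union> Sb \<union> Sc) + card Sd \<le> card (Sa \<union> Sb \<union> Sc \<union> Sd) + card {cd}"
    "card (Sa \<union> Sb \<union> Sc \<union> Sd) + card Se \<le> card (Sa \<union> Sb \<union> Sc \<union> Sd \<union> Se) + card {de, ea}"
    by (intro card_add_le_card_Un_add; use adj nonadj in auto)+
  moreover have "card {de, ea} \<le> 2" by (simp add: card_insert_if)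
  ultimately show ?thesis by simp
qed

locale pt_pl_sd_lines =
  fixes L :: "('a::{field,finite} ^ 'n) set set"
  assumes lines: "\<forall>l \<in> L. is_line l"
    and Pt: "cond_Pt L" and Pl: "cond_Pl L" and Sd: "cond_Sd L"
begin

lemma card_lines_in_plane:
  assumes "is_plane \<pi>" "l \<in> L" "m \<in> L" "l \<noteq> m" "l \<subseteq> \<pi>" "m \<subseteq> \<pi>"
  shows "card (lines_in L \<pi>) = CARD('a) + 1"
proof -
  have "{l, m} \<subseteq> lines_in L \<pi>" using assms unfolding lines_in_def by auto
  hence "2 \<le> card (lines_in L \<pi>)" using assms(4) card_mono[of "lines_in L \<pi>" "{l, m}"] by simp
  thus ?thesis using Pl assms(1) unfolding cond_Pl_def by fastforce
qed

lemma card_lines_in_planes_Int_le_1: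
  assumes "is_plane \<sigma>" "is_plane \<pi>" "\<sigma> \<noteq> \<pi>"
  shows "card (lines_in L \<sigma> \<inter> lines_in L \<pi>) \<le> 1"
proof -
  have eq: "\<sigma> \<inter> \<pi> = j" if "j \<in> lines_in L \<sigma> \<inter> lines_in L \<pi>" for j
    using that lines planes_Int_eq_line[OF assms] unfolding lines_in_def by blast
  have "j = j'" if "j \<in> lines_in L \<sigma> \<inter> lines_in L \<pi>" "j' \<in> lines_in L \<sigma> \<inter> lines_in L \<pi>" for j j'
    using eq[OF that(1)] eq[OF that(2)] by simp
  thus ?thesis by (simp add: card_le_Suc0_iff_eq)
qed

lemma card_lines_in_three_planes:
  assumes "is_plane \<pi>0" "is_plane \<pi>1" "is_plane \<pi>2" "\<pi>0 \<noteq> \<pi>1" "\<pi>0 \<noteq> \<pi>2" "\<pi>1 \<noteq> \<pi>2"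
    and "card (lines_in L \<pi>0) = CARD('a) + 1" "card (lines_in L \<pi>1) = CARD('a) + 1"
      "card (lines_in L \<pi>2) = CARD('a) + 1"
    and "\<pi>0 \<subseteq> S" "\<pi>1 \<subseteq> S" "\<pi>2 \<subseteq> S"
  shows "3 * CARD('a) \<le> card (lines_in L S)"
proof -
  let ?P0 = "lines_in L \<pi>0" and ?P1 = "lines_in L \<pi>1" and ?P2 = "lines_in L \<pi>2"
  have "card ((?P0 \<union> ?P1) \<inter> ?P2) \<le> card (?P0 \<inter> ?P2) + card (?P1 \<inter> ?P2)"
    by (metis Int_Un_distrib2 card_Un_le)
  hence "3 * CARD('a) \<le> card (?P0 \<union> ?P1 \<union> ?P2)"
    using card_Un_Int[OF finite finite, of ?P0 ?P1] card_Un_Int[OF finite finite, of "?P0 \<union> ?P1" ?P2]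
      card_lines_in_planes_Int_le_1[OF assms(1,2,4)] card_lines_in_planes_Int_le_1[OF assms(1,3,5)]
      card_lines_in_planes_Int_le_1[OF assms(2,3,6)] assms(7-9)
    by linarith
  moreover have "?P0 \<union> ?P1 \<union> ?P2 \<subseteq> lines_in L S" using assms unfolding lines_in_def by auto
  hence "card (?P0 \<union> ?P1 \<union> ?P2) \<le> card (lines_in L S)" by (simp add: card_mono)
  ultimately show ?thesis by linarith
qed

lemma lines_through_meet_in_plane:
  assumes "is_plane \<pi>" "l \<in> L" "n \<in> L" "l \<noteq> n" "l \<subseteq> \<pi>" "n \<subseteq> \<pi>"
    and "is_point X" "X \<subseteq> l" "X \<subseteq> n" "k \<in> L" "X \<subseteq> k"
  shows "k \<subseteq> \<pi>"
proof (rule ccontr)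
  assume k_out: "\<not> k \<subseteq> \<pi>"
  have ln: "is_line l" "is_line n" "is_line k" using assms(2,3,10) lines by auto
  define \<sigma>l where "\<sigma>l = vec.span (k \<union> l)"
  define \<sigma>n where "\<sigma>n = vec.span (k \<union> n)"
  define S where "S = vec.span (\<pi> \<union> k)"
  have "k \<noteq> l" "k \<noteq> n" using k_out assms(5,6) by auto
  hence planes: "is_plane \<sigma>l" "is_plane \<sigma>n" unfolding \<sigma>l_def \<sigma>n_def
    using is_plane_span_lines[OF ln(3,1) _ assms(7,11,8)] is_plane_span_lines[OF ln(3,2) _ assms(7,11,9)]
    by blast+
  have in_\<sigma>: "k \<subseteq> \<sigma>l" "l \<subseteq> \<sigma>l" "k \<subseteq> \<sigma>n" "n \<subseteq> \<sigma>n"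
    unfolding \<sigma>l_def \<sigma>n_def using vec.span_superset[of "k \<union> l"] vec.span_superset[of "k \<union> n"] by auto
  have "\<pi> \<subseteq> S" unfolding S_def using vec.span_superset by blast
  moreover have "\<sigma>l \<subseteq> S" "\<sigma>n \<subseteq> S"
    unfolding S_def \<sigma>l_def \<sigma>n_def using assms(5,6) by (auto intro!: vec.span_mono)
  ultimately have in_S: "\<pi> \<subseteq> S" "\<sigma>l \<subseteq> S" "\<sigma>n \<subseteq> S" by blast+
  have ne: "\<pi> \<noteq> \<sigma>l" "\<pi> \<noteq> \<sigma>n" using k_out in_\<sigma> by auto
  have "\<sigma>l \<noteq> \<sigma>n"
  proof
    assume "\<sigma>l = \<sigma>n"
    hence "n \<subseteq> \<pi> \<inter> \<sigma>l" using assms(6) in_\<sigma>(4) by blast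
    also have "\<pi> \<inter> \<sigma>l = l" using planes_Int_eq_line assms(1,5) planes(1) ne(1) ln(1) in_\<sigma>(2) by blast
    finally show False using proj_sub_subset_eq ln assms(4) by blast
  qed
  hence "3 * CARD('a) \<le> card (lines_in L S)"
    using card_lines_in_three_planes[OF assms(1) planes ne _ _ _ _ in_S]
      card_lines_in_plane[OF assms(1-6)] card_lines_in_plane[OF planes(1) assms(10,2)]
      card_lines_in_plane[OF planes(2) assms(10,3)] \<open>k \<noteq> l\<close> \<open>k \<noteq> n\<close> in_\<sigma>
    by simp
  moreover have "is_solid S" unfolding S_def
    using is_solid_span_plane_line[OF assms(1) ln(3) k_out assms(7) _ assms(11)] assms(5,8) by blast
  hence "card (lines_in L S) \<in> {0, 1, CARD('a) + 1, 2 * CARD('a) + 1}"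
    using Sd unfolding cond_Sd_def by blast
  ultimately show False using card_field_ge_2[where 'a='a] by auto
qed

definition pencil_plane :: "('a ^ 'n) set \<Rightarrow> ('a ^ 'n) set \<Rightarrow> bool" where
  "pencil_plane V \<pi> \<longleftrightarrow> is_plane \<pi> \<and> is_point V \<and>
     (\<exists>l\<in>L. \<exists>m\<in>L. l \<noteq> m \<and> V \<subseteq> l \<and> V \<subseteq> m \<and> l \<subseteq> \<pi> \<and> m \<subseteq> \<pi>)"

lemma pencil_plane_span:
  assumes "l \<in> L" "m \<in> L" "l \<noteq> m" "is_point V" "V \<subseteq> l" "V \<subseteq> m"
  shows "pencil_plane V (vec.span (l \<union> m))"
  unfolding pencil_plane_def
  using assms is_plane_span_lines lines vec.span_superset by (metis le_sup_iff)

lemma card_lines_in_pencil_plane: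
  "pencil_plane V \<pi> \<Longrightarrow> card (lines_in L \<pi>) = CARD('a) + 1"
  unfolding pencil_plane_def using card_lines_in_plane by blast

lemma pencil_plane_lines_through:
  assumes pencil: "pencil_plane V \<pi>" and n: "n \<in> lines_in L \<pi>"
  shows "V \<subseteq> n"
proof (rule ccontr)
  assume V_n: "\<not> V \<subseteq> n"
  obtain l m where lm: "l \<in> L" "m \<in> L" "l \<noteq> m" "V \<subseteq> l" "V \<subseteq> m" "l \<subseteq> \<pi>" "m \<subseteq> \<pi>"
    and \<pi>: "is_plane \<pi>" and V: "is_point V"
    using pencil unfolding pencil_plane_def by blast
  have nL: "n \<in> L" "n \<subseteq> \<pi>" using n unfolding lines_in_def by auto
  have "l \<noteq> n" using lm V_n by blast
  define X where "X = l \<inter> n"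
  have "is_point X" unfolding X_def
    using coplanar_lines_Int_point[OF \<pi> _ _ \<open>l \<noteq> n\<close> lm(6) nL(2)] lm(1) nL(1) lines by blast
  moreover have "X \<subseteq> l" "X \<subseteq> n" unfolding X_def by auto
  ultimately have X: "is_point X" "X \<subseteq> l" "X \<subseteq> n" by blast+
  let ?star = "{k \<in> L. X \<subseteq> k}"
  have star_sub: "?star \<subseteq> lines_in L \<pi>"
    using lines_through_meet_in_plane[OF \<pi> lm(1) nL(1) \<open>l \<noteq> n\<close> lm(6) nL(2) X]
    unfolding lines_in_def by blast
  have "?star \<noteq> {}" using lm(1) X(2) by blast
  hence "card ?star = CARD('a) + 1" using Pt X(1) unfolding cond_Pt_def by fastforce
  hence "?star = lines_in L \<pi>"
    using card_subset_eq[OF finite star_sub] card_lines_in_pencil_plane[OF pencil] by simp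
  hence "X \<subseteq> l \<inter> m" using lm X unfolding lines_in_def by blast
  hence "X = V" using lines_Int_eq_point[of l m V] proj_sub_subset_eq[of 0 X V] lm lines V X by auto
  thus False using V_n X(3) by simp
qed

lemma pencil_planes_Int_subset:
  assumes "pencil_plane X \<pi>X" "pencil_plane Y \<pi>Y" "X \<noteq> Y" "is_line l" "X \<subseteq> l" "Y \<subseteq> l"
  shows "lines_in L \<pi>X \<inter> lines_in L \<pi>Y \<subseteq> {l}"
proof
  fix n assume n: "n \<in> lines_in L \<pi>X \<inter> lines_in L \<pi>Y"
  have "X \<subseteq> n" "Y \<subseteq> n" using n pencil_plane_lines_through assms(1,2) by blast+
  moreover have "is_line n" using n lines unfolding lines_in_def by blast
  ultimately show "n \<in> {l}"
    using lines_eq_if_two_points[of n l X Y] assms unfolding pencil_plane_def by blast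
qed

lemma pencil_planes_Int_empty:
  assumes pX: "pencil_plane X \<pi>X" and pZ: "pencil_plane Z \<pi>Z"
    and "is_point W" "X \<noteq> W" "join {X, W} \<in> L" "join {X, W} \<subseteq> \<pi>X"
    and "join {W, Z} \<in> L" "join {X, W} \<noteq> join {W, Z}"
  shows "lines_in L \<pi>X \<inter> lines_in L \<pi>Z = {}"
proof (rule ccontr)
  assume "lines_in L \<pi>X \<inter> lines_in L \<pi>Z \<noteq> {}"
  then obtain n where n: "n \<in> lines_in L \<pi>X" "n \<in> lines_in L \<pi>Z" by blast
  have "Z \<subseteq> \<pi>X" using pencil_plane_lines_through[OF pZ n(2)] n(1) unfolding lines_in_def by blast
  moreover have "W \<subseteq> \<pi>X" using assms(6) subset_join[of W "{X, W}"] by blast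
  moreover have "vec.subspace \<pi>X" using pX unfolding pencil_plane_def proj_sub_def by blast
  ultimately have "join {W, Z} \<subseteq> \<pi>X" by (intro join_subset) auto
  hence "join {W, Z} \<in> lines_in L \<pi>X" using assms(7) unfolding lines_in_def by blast
  hence "X \<subseteq> join {W, Z}" by (rule pencil_plane_lines_through[OF pX])
  hence "join {W, Z} = join {X, W}"
    using lines_eq_if_two_points[of "join {W, Z}" "join {X, W}" X W] assms lines subset_join
    unfolding pencil_plane_def by (metis insertCI)
  thus False using assms(8) by simp
qed

lemma pencil_plane_vertex_plane:
  assumes "join {X, Y} \<in> L" "join {Y, Z} \<in> L" "join {X, Y} \<noteq> join {Y, Z}" "is_point Y"
  shows "pencil_plane Y (vertex_plane X Y Z)"
proof -
  have "Y \<subseteq> join {X, Y}" "Y \<subseteq> join {Y, Z}" by (simp_all add: subset_join)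
  thus ?thesis unfolding vertex_plane_def by (rule pencil_plane_span[OF assms])
qed

lemma pentagon_vertex:
  assumes "is_pentagon L A B C D E"
  shows "pencil_plane A (vertex_plane E A B)"
    and "lines_in L (vertex_plane E A B) \<inter> lines_in L (vertex_plane A B C) \<subseteq> {join {A, B}}"
    and "lines_in L (vertex_plane E A B) \<inter> lines_in L (vertex_plane B C D) = {}"
proof -
  have pts: "is_point A" "is_point B" "is_point C" "A \<noteq> B"
    and edges: "join {E, A} \<in> L" "join {A, B} \<in> L" "join {B, C} \<in> L" "join {C, D} \<in> L"
      "join {E, A} \<noteq> join {A, B}" "join {A, B} \<noteq> join {B, C}" "join {B, C} \<noteq> join {C, D}"
    using assms unfolding is_pentagon_def by (simp_all add: eq_commute)
  show pA: "pencil_plane A (vertex_plane E A B)"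
    by (rule pencil_plane_vertex_plane[OF edges(1,2,5) pts(1)])
  have pB: "pencil_plane B (vertex_plane A B C)"
    by (rule pencil_plane_vertex_plane[OF edges(2,3,6) pts(2)])
  have pC: "pencil_plane C (vertex_plane B C D)"
    by (rule pencil_plane_vertex_plane[OF edges(3,4,7) pts(3)])
  have "is_line (join {A, B})" using edges(2) lines by blast
  thus "lines_in L (vertex_plane E A B) \<inter> lines_in L (vertex_plane A B C) \<subseteq> {join {A, B}}"
    by (rule pencil_planes_Int_subset[OF pA pB \<open>A \<noteq> B\<close>]) (simp_all add: subset_join)
  have "join {A, B} \<subseteq> vertex_plane E A B"
    unfolding vertex_plane_def using vec.span_superset by blast
  thus "lines_in L (vertex_plane E A B) \<inter> lines_in L (vertex_plane B C D) = {}"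
    by (rule pencil_planes_Int_empty[OF pA pC pts(2,4) edges(2) _ edges(3,6)])
qed

lemma is_pentagon_rotate: "is_pentagon L A B C D E \<Longrightarrow> is_pentagon L B C D E A"
  unfolding is_pentagon_def by (simp add: eq_commute)

lemma card_lines_in_pentagon_join:
  assumes pent: "is_pentagon L A B C D E"
  shows "5 * CARD('a) \<le> card (lines_in L (join {A, B, C, D, E}))"
proof -
  note rot = is_pentagon_rotate
  note vA = pentagon_vertex[OF pent] and vB = pentagon_vertex[OF rot[OF pent]]
    and vC = pentagon_vertex[OF rot[OF rot[OF pent]]]
    and vD = pentagon_vertex[OF rot[OF rot[OF rot[OF pent]]]]
    and vE = pentagon_vertex[OF rot[OF rot[OF rot[OF rot[OF pent]]]]]
  let ?S = "\<lambda>X Y Z. lines_in L (vertex_plane X Y Z)"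
  let ?U = "?S E A B \<union> ?S A B C \<union> ?S B C D \<union> ?S C D E \<union> ?S D E A"
  have "card (?S E A B) + card (?S A B C) + card (?S B C D) + card (?S C D E) + card (?S D E A)
      \<le> card ?U + 5"
    by (rule card_Un_cycle5[OF finite vA(2) vB(2) vC(2) vD(2) vE(2) vA(3) vB(3) vC(3) vD(3) vE(3)])
  hence "5 * CARD('a) \<le> card ?U"
    by (simp only: card_lines_in_pencil_plane[OF vA(1)] card_lines_in_pencil_plane[OF vB(1)]
        card_lines_in_pencil_plane[OF vC(1)] card_lines_in_pencil_plane[OF vD(1)]
        card_lines_in_pencil_plane[OF vE(1)])
  moreover have "vertex_plane E A B \<subseteq> join {A, B, C, D, E}" "vertex_plane A B C \<subseteq> join {A, B, C, D, E}"
    "vertex_plane B C D \<subseteq> join {A, B, C, D, E}" "vertex_plane C D E \<subseteq> join {A, B, C, D, E}"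
    "vertex_plane D E A \<subseteq> join {A, B, C, D, E}"
    by (simp_all add: vertex_plane_subset_join)
  hence "?U \<subseteq> lines_in L (join {A, B, C, D, E})" unfolding lines_in_def by blast
  hence "card ?U \<le> card (lines_in L (join {A, B, C, D, E}))" by (simp add: card_mono)
  ultimately show ?thesis by linarith
qed

lemma pdim_pentagon_join:
  assumes pent: "is_pentagon L A B C D E"
  shows "pdim (join {A, B, C, D, E}) = 4"
proof -
  define U where "U = join {A, B, C, D, E}"
  have U: "vec.subspace U" unfolding U_def join_def by simp
  have "vec.dim U = vec.dim (\<Union>{A, B, C, D, E})" unfolding U_def join_def by simp
  also have "\<dots> \<le> (\<Sum>X\<in>{A, B, C, D, E}. vec.dim X)" by (rule vec.dim_Union_le_sum) simp
  also have "\<dots> = 5" using pent unfolding is_pentagon_def proj_sub_def by simp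
  finally have le5: "vec.dim U \<le> 5" .
  have "is_plane (vertex_plane E A B)"
    using pentagon_vertex(1)[OF pent] unfolding pencil_plane_def by blast
  moreover have "vertex_plane E A B \<subseteq> U"
    unfolding U_def by (rule vertex_plane_subset_join) simp_all
  ultimately have ge3: "3 \<le> vec.dim U"
    using vec.dim_subset[of "vertex_plane E A B" U] unfolding proj_sub_def by simp
  have many: "2 * CARD('a) + 1 < card (lines_in L U)"
    using card_lines_in_pentagon_join[OF pent] card_field_ge_2[where 'a='a] unfolding U_def by linarith
  have "\<not> is_plane U"
  proof
    assume "is_plane U"
    hence "card (lines_in L U) \<in> {0, 1, CARD('a) + 1}" using Pl unfolding cond_Pl_def by blast
    thus False using many by auto
  qed
  moreover have "\<not> is_solid U"
  proof
    assume "is_solid U"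
    hence "card (lines_in L U) \<in> {0, 1, CARD('a) + 1, 2 * CARD('a) + 1}"
      using Sd unfolding cond_Sd_def by blast
    thus False using many by auto
  qed
  ultimately have "vec.dim U = 5" using U le5 ge3 unfolding proj_sub_def by auto
  thus ?thesis unfolding pdim_def U_def by simp
qed

end

theorem lemma4:
  fixes L :: "('a::{field,finite} ^ 'n) set set"
    and A B C D E :: "('a ^ 'n) set"
  assumes lines: "\<forall>l \<in> L. is_line l"
    and nonempty: "L \<noteq> {}"
    and Pt: "cond_Pt L" and Pl: "cond_Pl L" and Sd: "cond_Sd L" and To: "cond_To L"
    and pent: "is_pentagon L A B C D E"
  shows "card (lines_in L (join {A, B, C, D, E})) \<ge> 5 * CARD('a)
         \<and> pdim (join {A, B, C, D, E}) = 4"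
proof -
  interpret pt_pl_sd_lines L using lines Pt Pl Sd by unfold_locales
  show ?thesis using card_lines_in_pentagon_join[OF pent] pdim_pentagon_join[OF pent] by simp
qed

end
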